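(* Let $T$ and $k$ be positive integers and let $p_1,\dots,p_k\in(0,1]$, with $q_i=1-p_i$. Consider blocks $i=1,\dots,k$, each of $T$ slots. In block $i$ the slot success indicators are i.i.d. Bernoulli$(p_i)$, and the blocks are independent. Block $0$ is a virtual block that is always successful and ends with a success; accordingly set $p_0=1$ and $q_0=0$. Let $Z(i)$ indicate that block $i$ contains at least one success. On the event $Z(k)=1$, define the following quantities: - $\kappa\in\{1,\dots,k\}$, such that $k-\kappa$ is the most recent block before $k$ with $Z(k-\kappa)=1$; - $W_{k-\kappa}$, the number of failure slots after the last success in block $k-\kappa$; - $X_k$, the number of failure slots before the first success in block $k$. The peak latency of the first successfully received input in block $k$ is $$\mathcal{L}^{\rm P}_{\kappa,k}=T(\kappa-1)+W_{k-\kappa}+X_k+1.$$ Then $\Theta^{\rm pl}_k:=\mathbb{E}[\mathcal{L}^{\rm P}_{\kappa,k}\mid Z(k)=1]$ equals $$\sum_{\kappa=1}^{k}(1-q_{k-\kappa}^T)\Big[\prod_{i=k-\kappa+1}^{k-1}q_i^T\Big]\Big[\frac{q_{k-\kappa}}{p_{k-\kappa}}+T\kappa\Big]-T\sum_{\kappa=1}^{k}\Big[\prod_{i=k-\kappa}^{k-1}q_i^T\Big]-T+\Big(\frac{q_k}{p_k}-\frac{Tq_k^T}{1-q_k^T}\Big)+1.$$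
   Context: Empty products equal $1$. The block-$0$ convention means block $0$ is always treated as a successful block, so $\kappa=k$ corresponds to no successful block among $1,\dots,k-1$. *)

theory Defs
  imports "HOL-Probability.Probability"
begin

text \<open>Outcome: a function w :: nat \<times> nat \<Rightarrow> bool, w (i,j) = success of slot j (0 \<le> j < T)
  in block i (1 \<le> i \<le> k). Slots are independent Bernoulli(p i) for block i.\<close>

definition slot_space :: "nat \<Rightarrow> nat \<Rightarrow> (nat \<Rightarrow> real) \<Rightarrow> (nat \<times> nat \<Rightarrow> bool) pmf" where
  "slot_space T k p = Pi_pmf ({1..k} \<times> {..<T}) False (\<lambda>(i,j). bernoulli_pmf (p i))"

definition Zb :: "nat \<Rightarrow> (nat \<times> nat \<Rightarrow> bool) \<Rightarrow> nat \<Rightarrow> bool" where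
  "Zb T w i \<longleftrightarrow> i = 0 \<or> (\<exists>j<T. w (i,j))"

definition kappa :: "nat \<Rightarrow> nat \<Rightarrow> (nat \<times> nat \<Rightarrow> bool) \<Rightarrow> nat" where
  "kappa T k w = (LEAST m. 1 \<le> m \<and> m \<le> k \<and> Zb T w (k - m))"

text \<open>W: number of failure slots after the last success in block b (0 for the virtual block 0,
  which ends with a success).\<close>
definition Wb :: "nat \<Rightarrow> (nat \<times> nat \<Rightarrow> bool) \<Rightarrow> nat \<Rightarrow> nat" where
  "Wb T w b = (if b = 0 then 0 else T - 1 - (GREATEST j. j < T \<and> w (b,j)))"

definition Xb :: "nat \<Rightarrow> (nat \<times> nat \<Rightarrow> bool) \<Rightarrow> nat \<Rightarrow> nat" where
  "Xb T w b = (LEAST j. j < T \<and> w (b,j))"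

definition peak_latency :: "nat \<Rightarrow> nat \<Rightarrow> (nat \<times> nat \<Rightarrow> bool) \<Rightarrow> real" where
  "peak_latency T k w =
     real (T * (kappa T k w - 1) + Wb T w (k - kappa T k w) + Xb T w k + 1)"

end

theory Submission
  imports Defs
begin

text \<open>
  Let D(n) be the number of failure slots between the last success in blocks 0..n and the end
  of block n. Then the latency is D(k-1) + X(k) + 1 with D(k-1) = T(kappa-1) + W(k-kappa), and
  D(n+1) = W(n+1) if block n+1 succeeds, T + D(n) otherwise. D(k-1) only depends on blocks
  1..k-1, so conditioning on Z(k) only affects X(k).

  In a block of t Bernoulli(s) slots, the number of failures before the first success and the
  number after the last success, both counted as t when the block fails, have the same mean
  sum_{j=1..t} (1-s)^j = (1-s)(1-(1-s)^t)/s. Hence E D(n+1) = q(1-q^T)/p + q^T E D(n) for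
  p = p(n+1), E[X(k); Z(k)] = q(1-q^T)/p - T q^T and P(Z(k)) = 1 - q^T for p = p(k).
  The stated closed form is an Abel summation of the unrolled recursion for E D(k-1); it
  simplifies because, with Q(i) = q(i)^T and Q(0) = 0, the weights (1-Q(b)) Q(b+1)...Q(k-1)
  of "block b is the last successful one" sum to 1.
\<close>

lemma finite_set_Pi_pmf:
  fixes P :: "'a \<Rightarrow> 'b::finite pmf"
  assumes "finite A"
  shows "finite (set_pmf (Pi_pmf A d P))"
proof (rule finite_subset)
  show "set_pmf (Pi_pmf A d P) \<subseteq> PiE_dflt A d (set_pmf \<circ> P)"
    using assms by (rule set_Pi_pmf_subset')
  show "finite (PiE_dflt A d (set_pmf \<circ> P))"
    using assms by (intro finite_PiE_dflt) auto
qed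

lemma expectation_pair_pmf:
  fixes h :: "'a \<times> 'b \<Rightarrow> real"
  assumes "finite (set_pmf M)" "finite (set_pmf N)"
  shows "measure_pmf.expectation (pair_pmf M N) h
       = measure_pmf.expectation M (\<lambda>a. measure_pmf.expectation N (\<lambda>b. h (a, b)))"
proof -
  have "measure_pmf.expectation (pair_pmf M N) h
      = (\<Sum>(a, b)\<in>set_pmf M \<times> set_pmf N. h (a, b) * (pmf M a * pmf N b))"
    using assms by (subst integral_measure_pmf_real) (auto intro!: sum.cong simp: pmf_pair)
  also have "\<dots> = (\<Sum>a\<in>set_pmf M. (\<Sum>b\<in>set_pmf N. h (a, b) * pmf N b) * pmf M a)"
    by (simp add: sum.cartesian_product[symmetric] sum_distrib_left sum_distrib_right mult_ac)
  also have "\<dots> = measure_pmf.expectation M (\<lambda>a. measure_pmf.expectation N (\<lambda>b. h (a, b)))"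
    using assms by (simp add: integral_measure_pmf_real)
  finally show ?thesis .
qed

lemma expectation_cond_pmf:
  fixes f :: "'a \<Rightarrow> real"
  assumes "finite (set_pmf M)" "set_pmf M \<inter> A \<noteq> {}"
  shows "measure_pmf.expectation (cond_pmf M A) f
       = measure_pmf.expectation M (\<lambda>x. indicator A x * f x) / measure_pmf.prob M A"
proof -
  have "measure_pmf.expectation (cond_pmf M A) f
      = (\<Sum>x\<in>set_pmf M. f x * pmf (cond_pmf M A) x)"
    using assms by (intro integral_measure_pmf_real) auto
  also have "\<dots> = (\<Sum>x\<in>set_pmf M. indicator A x * f x * pmf M x) / measure_pmf.prob M A"
    by (auto simp: pmf_cond[OF assms(2)] indicator_def sum_divide_distrib intro!: sum.cong)
  also have "(\<Sum>x\<in>set_pmf M. indicator A x * f x * pmf M x)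
           = measure_pmf.expectation M (\<lambda>x. indicator A x * f x)"
    using assms by (intro integral_measure_pmf_real[symmetric]) auto
  finally show ?thesis .
qed

definition block_pmf :: "nat \<Rightarrow> nat \<Rightarrow> real \<Rightarrow> (nat \<times> nat \<Rightarrow> bool) pmf" where
  "block_pmf b t s = Pi_pmf ({b} \<times> {..<t}) False (\<lambda>_. bernoulli_pmf s)"

lemma finite_set_block_pmf [simp]: "finite (set_pmf (block_pmf b t s))"
  unfolding block_pmf_def by (intro finite_set_Pi_pmf) auto

lemma integrable_block_pmf [simp]: "integrable (measure_pmf (block_pmf b t s)) (f :: _ \<Rightarrow> real)"
  by (simp add: integrable_measure_pmf_finite)

lemma expectation_block_pmf_Suc:
  fixes F :: "(nat \<times> nat \<Rightarrow> bool) \<Rightarrow> real"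
  assumes "0 \<le> s" "s \<le> 1"
  shows "measure_pmf.expectation (block_pmf b (Suc t) s) F
       = s * measure_pmf.expectation (block_pmf b t s) (\<lambda>f. F (f((b, t) := True)))
         + (1 - s) * measure_pmf.expectation (block_pmf b t s) (\<lambda>f. F (f((b, t) := False)))"
proof -
  have "{b} \<times> {..<Suc t} = insert (b, t) ({b} \<times> {..<t})"
    by auto
  then have "block_pmf b (Suc t) s
      = map_pmf (\<lambda>(y, f). f((b, t) := y)) (pair_pmf (bernoulli_pmf s) (block_pmf b t s))"
    by (simp add: block_pmf_def Pi_pmf_insert)
  then show ?thesis
    using assms by (simp add: expectation_pair_pmf finite_subset[OF subset_UNIV])
qed

lemma Zb_fun_upd:
  "b \<noteq> 0 \<Longrightarrow> Zb (Suc t) (f((b, t) := y)) b \<longleftrightarrow> Zb t f b \<or> y"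
  by (auto simp: Zb_def less_Suc_eq)

lemma Xb_fun_upd:
  assumes "b \<noteq> 0" "Zb t f b"
  shows "Xb (Suc t) (f((b, t) := y)) b = Xb t f b"
proof -
  obtain j where j: "j < t" "f (b, j)"
    using assms by (auto simp: Zb_def)
  have first: "Xb t f b < t \<and> f (b, Xb t f b)"
    unfolding Xb_def by (rule LeastI[of _ j]) (use j in auto)
  have "i < t \<Longrightarrow> f (b, i) \<Longrightarrow> Xb t f b \<le> i" for i
    unfolding Xb_def by (rule Least_le) auto
  with first show ?thesis
    unfolding Xb_def[of "Suc t"] by (intro Least_equality) (auto simp: less_Suc_eq)
qed

lemma Xb_fun_upd_True:
  "\<not> Zb t f b \<Longrightarrow> Xb (Suc t) (f((b, t) := True)) b = t"
  unfolding Xb_def by (rule Least_equality) (auto simp: Zb_def less_Suc_eq split: if_splits)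

lemma Wb_fun_upd_True:
  "b \<noteq> 0 \<Longrightarrow> Wb (Suc t) (f((b, t) := True)) b = 0"
  unfolding Wb_def by (subst Greatest_equality[of _ t]) auto

lemma Wb_fun_upd_False:
  assumes "b \<noteq> 0" "Zb t f b"
  shows "Wb (Suc t) (f((b, t) := False)) b = Suc (Wb t f b)"
proof -
  obtain j where j: "j < t" "f (b, j)"
    using assms by (auto simp: Zb_def)
  have "(GREATEST i. i < t \<and> f (b, i)) < t"
    by (rule conjunct1[OF GreatestI_ex_nat[where b=t]]) (use j in auto)
  moreover have "(\<lambda>i. i < Suc t \<and> (f((b, t) := False)) (b, i)) = (\<lambda>i. i < t \<and> f (b, i))"
    by (auto simp: less_Suc_eq fun_eq_iff)
  ultimately show ?thesis
    using assms(1) by (simp add: Wb_def)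
qed

lemma expectation_no_success_block:
  assumes "b \<noteq> 0" "0 \<le> s" "s \<le> 1"
  shows "measure_pmf.expectation (block_pmf b t s) (\<lambda>w. of_bool (\<not> Zb t w b)) = (1 - s) ^ t"
proof (induction t)
  case 0
  show ?case using assms(1) by (simp add: block_pmf_def Zb_def)
next
  case (Suc t)
  then show ?case
    using assms by (simp add: expectation_block_pmf_Suc Zb_fun_upd)
qed

lemma expectation_first_success_block:
  assumes "b \<noteq> 0" "0 < s" "s \<le> 1"
  shows "measure_pmf.expectation (block_pmf b t s) (\<lambda>w. if Zb t w b then real (Xb t w b) else real t)
       = (1 - s) * (1 - (1 - s) ^ t) / s"
proof (induction t)
  case 0
  show ?case using assms(1) by (simp add: block_pmf_def Zb_def)
next
  case (Suc t)
  let ?X = "\<lambda>t w. if Zb t w b then real (Xb t w b) else real t"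
  have "?X (Suc t) (f((b, t) := True)) = ?X t f"
    and "?X (Suc t) (f((b, t) := False)) = ?X t f + of_bool (\<not> Zb t f b)" for f
    using assms(1) by (auto simp: Zb_fun_upd Xb_fun_upd Xb_fun_upd_True)
  then have "measure_pmf.expectation (block_pmf b (Suc t) s) (?X (Suc t))
      = s * measure_pmf.expectation (block_pmf b t s) (?X t)
        + (1 - s) * (measure_pmf.expectation (block_pmf b t s) (?X t) + (1 - s) ^ t)"
    using assms by (simp add: expectation_block_pmf_Suc expectation_no_success_block)
  also have "\<dots> = (1 - s) * (1 - (1 - s) ^ Suc t) / s"
    using assms by (simp add: Suc.IH field_simps)
  finally show ?case .
qed

lemma expectation_last_success_block:
  assumes "b \<noteq> 0" "0 < s" "s \<le> 1"
  shows "measure_pmf.expectation (block_pmf b t s) (\<lambda>w. if Zb t w b then real (Wb t w b) else real t)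
       = (1 - s) * (1 - (1 - s) ^ t) / s"
proof (induction t)
  case 0
  show ?case using assms(1) by (simp add: block_pmf_def Zb_def)
next
  case (Suc t)
  let ?W = "\<lambda>t w. if Zb t w b then real (Wb t w b) else real t"
  have "?W (Suc t) (f((b, t) := True)) = 0"
    and "?W (Suc t) (f((b, t) := False)) = ?W t f + 1" for f
    using assms(1) by (auto simp: Zb_fun_upd Wb_fun_upd_True Wb_fun_upd_False)
  then have "measure_pmf.expectation (block_pmf b (Suc t) s) (?W (Suc t))
      = (1 - s) * ((1 - s) * (1 - (1 - s) ^ t) / s + 1)"
    using assms by (simp add: expectation_block_pmf_Suc Suc.IH)
  also have "\<dots> = (1 - s) * (1 - (1 - s) ^ Suc t) / s"
    using assms by (simp add: field_simps)
  finally show ?case .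
qed

lemma finite_set_slot_space [simp]: "finite (set_pmf (slot_space T n p))"
  unfolding slot_space_def by (intro finite_set_Pi_pmf) auto

lemma integrable_slot_space [simp]: "integrable (measure_pmf (slot_space T n p)) (f :: _ \<Rightarrow> real)"
  by (simp add: integrable_measure_pmf_finite)

lemma slot_space_Suc:
  "slot_space T (Suc n) p
     = map_pmf (\<lambda>(f, g). override_on g f ({1..n} \<times> {..<T}))
         (pair_pmf (slot_space T n p) (block_pmf (Suc n) T (p (Suc n))))"
proof -
  have slots: "{1..Suc n} \<times> {..<T} = {1..n} \<times> {..<T} \<union> {Suc n} \<times> {..<T}"
    by auto
  have block: "block_pmf (Suc n) T (p (Suc n))
      = Pi_pmf ({Suc n} \<times> {..<T}) False (\<lambda>(i, j). bernoulli_pmf (p i))"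
    unfolding block_pmf_def by (intro Pi_pmf_cong) auto
  show ?thesis
    unfolding slot_space_def slots block override_on_def by (rule Pi_pmf_union) auto
qed

lemma expectation_slot_space_Suc:
  fixes F :: "(nat \<times> nat \<Rightarrow> bool) \<Rightarrow> real"
  shows "measure_pmf.expectation (slot_space T (Suc n) p) F
       = measure_pmf.expectation (slot_space T n p) (\<lambda>f.
           measure_pmf.expectation (block_pmf (Suc n) T (p (Suc n))) (\<lambda>g.
             F (override_on g f ({1..n} \<times> {..<T}))))"
  by (simp add: slot_space_Suc expectation_pair_pmf)

lemma
  assumes "\<And>j. (b, j) \<notin> A"
  shows Zb_override_on: "Zb T (override_on g f A) b = Zb T g b"
    and Xb_override_on: "Xb T (override_on g f A) b = Xb T g b"
    and Wb_override_on: "Wb T (override_on g f A) b = Wb T g b"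
  using assms by (simp_all add: Zb_def Xb_def Wb_def)

primrec trailing_failures :: "nat \<Rightarrow> (nat \<times> nat \<Rightarrow> bool) \<Rightarrow> nat \<Rightarrow> nat" where
  "trailing_failures T w 0 = 0"
| "trailing_failures T w (Suc n)
     = (if Zb T w (Suc n) then Wb T w (Suc n) else T + trailing_failures T w n)"

lemma trailing_failures_cong:
  assumes "\<And>i j. 0 < i \<Longrightarrow> i \<le> n \<Longrightarrow> j < T \<Longrightarrow> w (i, j) = w' (i, j)"
  shows "trailing_failures T w n = trailing_failures T w' n"
  using assms
proof (induction n)
  case (Suc n)
  have "(\<lambda>j. j < T \<and> w (Suc n, j)) = (\<lambda>j. j < T \<and> w' (Suc n, j))"
    using Suc.prems by auto
  then have "Zb T w (Suc n) = Zb T w' (Suc n)" "Wb T w (Suc n) = Wb T w' (Suc n)"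
    by (simp_all only: Zb_def Wb_def)
  moreover have "trailing_failures T w n = trailing_failures T w' n"
    using Suc by simp
  ultimately show ?case
    by simp
qed simp

lemma trailing_failures_override_on:
  assumes "{1..n} \<times> {..<T} \<subseteq> A"
  shows "trailing_failures T (override_on g f A) n = trailing_failures T f n"
  using assms by (intro trailing_failures_cong) (auto simp: subset_iff)

lemma kappa_Suc_Least: "kappa T (Suc n) w = Suc (LEAST m. m \<le> n \<and> Zb T w (n - m))"
  unfolding kappa_def by (subst Least_Suc[of _ "Suc n"]) (auto simp: Zb_def)

lemma kappa_Suc: "kappa T (Suc n) w = (if Zb T w n then 1 else Suc (kappa T n w))"
proof (cases "Zb T w n")
  case True
  then show ?thesis
    by (simp add: kappa_Suc_Least Least_eq_0)
next
  case False
  then have "(\<lambda>m. m \<le> n \<and> Zb T w (n - m)) = (\<lambda>m. 1 \<le> m \<and> m \<le> n \<and> Zb T w (n - m))"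
    by (metis One_nat_def Suc_le_eq diff_zero neq0_conv)
  with False show ?thesis
    unfolding kappa_Suc_Least kappa_def[of T n w] by simp
qed

lemma trailing_failures_kappa:
  "T * (kappa T (Suc n) w - 1) + Wb T w (Suc n - kappa T (Suc n) w) = trailing_failures T w n"
proof (induction n)
  case 0
  show ?case by (simp add: kappa_Suc Zb_def Wb_def)
next
  case (Suc n)
  then show ?case
    by (cases "kappa T (Suc n) w") (auto simp: kappa_Suc split: if_splits)
qed

lemma peak_latency_Suc:
  "peak_latency T (Suc n) w = real (trailing_failures T w n) + real (Xb T w (Suc n)) + 1"
  unfolding peak_latency_def trailing_failures_kappa[symmetric] by simp

lemma expectation_trailing_failures:
  assumes "\<And>i. i \<in> {1..n} \<Longrightarrow> 0 < p i \<and> p i \<le> 1"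
  shows "measure_pmf.expectation (slot_space T n p) (\<lambda>w. real (trailing_failures T w n))
       = (\<Sum>b=1..n. (1 - (1 - p b) ^ T) * ((1 - p b) / p b) * (\<Prod>i=b+1..n. (1 - p i) ^ T))"
  using assms
proof (induction n)
  case 0
  then show ?case by simp
next
  case (Suc n)
  let ?B = "block_pmf (Suc n) T (p (Suc n))"
  let ?W = "\<lambda>g. if Zb T g (Suc n) then real (Wb T g (Suc n)) else real T"
  have p: "0 < p (Suc n)" "p (Suc n) \<le> 1"
    using Suc.prems by auto
  have split: "real (trailing_failures T (override_on g f ({1..n} \<times> {..<T})) (Suc n))
      = ?W g + real (trailing_failures T f n) * of_bool (\<not> Zb T g (Suc n))" for f g
    by (simp add: Zb_override_on Wb_override_on trailing_failures_override_on)
  have "measure_pmf.expectation (slot_space T (Suc n) p)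
        (\<lambda>w. real (trailing_failures T w (Suc n)))
      = measure_pmf.expectation (slot_space T n p) (\<lambda>f. measure_pmf.expectation ?B (\<lambda>g.
          ?W g + real (trailing_failures T f n) * of_bool (\<not> Zb T g (Suc n))))"
    by (simp only: expectation_slot_space_Suc split)
  also have "\<dots> = measure_pmf.expectation (slot_space T n p) (\<lambda>f.
      measure_pmf.expectation ?B ?W + real (trailing_failures T f n) * (1 - p (Suc n)) ^ T)"
    using p by (simp add: expectation_no_success_block)
  also have "\<dots> = (1 - p (Suc n)) * (1 - (1 - p (Suc n)) ^ T) / p (Suc n)
      + (1 - p (Suc n)) ^ T
        * measure_pmf.expectation (slot_space T n p) (\<lambda>w. real (trailing_failures T w n))"
    using p by (simp add: expectation_last_success_block)
  also have "\<dots> = (\<Sum>b=1..Suc n. (1 - (1 - p b) ^ T) * ((1 - p b) / p b)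
                                    * (\<Prod>i=b+1..Suc n. (1 - p i) ^ T))"
    using Suc by (simp add: sum_distrib_left prod.cl_ivl_Suc mult_ac)
  finally show ?case .
qed

lemma sum_prod_telescope:
  fixes Q :: "nat \<Rightarrow> 'a::comm_ring_1"
  shows "(\<Sum>b\<le>n. (1 - Q b) * (\<Prod>i=b+1..n. Q i)) = 1 - (\<Prod>i\<le>n. Q i)"
proof (induction n)
  case (Suc n)
  have "(\<Sum>b\<le>Suc n. (1 - Q b) * (\<Prod>i=b+1..Suc n. Q i))
      = Q (Suc n) * (\<Sum>b\<le>n. (1 - Q b) * (\<Prod>i=b+1..n. Q i)) + (1 - Q (Suc n))"
    by (simp add: sum_distrib_left prod.cl_ivl_Suc mult_ac)
  also have "\<dots> = Q (Suc n) * (1 - (\<Prod>i\<le>n. Q i)) + (1 - Q (Suc n))"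
    by (simp only: Suc.IH)
  also have "\<dots> = 1 - (\<Prod>i\<le>Suc n. Q i)"
    by (simp add: algebra_simps)
  finally show ?case .
qed simp

lemma sum_prod_weighted:
  fixes Q :: "nat \<Rightarrow> 'a::comm_ring_1"
  assumes "Q 0 = 0"
  shows "(\<Sum>b\<le>n. (1 - Q b) * (\<Prod>i=b+1..n. Q i) * of_nat (Suc n - b))
       = 1 + (\<Sum>b\<le>n. \<Prod>i=b..n. Q i)"
proof (induction n)
  case 0
  then show ?case using assms by simp
next
  case (Suc n)
  have "(\<Prod>i\<le>n. Q i) = 0"
    using assms by (intro prod_zero) auto
  then have telescope: "(\<Sum>b\<le>n. (1 - Q b) * (\<Prod>i=b+1..n. Q i)) = 1"
    by (simp only: sum_prod_telescope) simp
  have "(\<Sum>b\<le>Suc n. (1 - Q b) * (\<Prod>i=b+1..Suc n. Q i) * of_nat (Suc (Suc n) - b))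
      = Q (Suc n) * (\<Sum>b\<le>n. (1 - Q b) * (\<Prod>i=b+1..n. Q i) * (of_nat (Suc n - b) + 1))
        + (1 - Q (Suc n))"
    by (simp add: sum_distrib_left prod.cl_ivl_Suc Suc_diff_le mult_ac)
  also have "\<dots> = Q (Suc n) * ((\<Sum>b\<le>n. (1 - Q b) * (\<Prod>i=b+1..n. Q i) * of_nat (Suc n - b))
        + (\<Sum>b\<le>n. (1 - Q b) * (\<Prod>i=b+1..n. Q i))) + (1 - Q (Suc n))"
    by (simp only: distrib_left mult_1_right sum.distrib)
  also have "\<dots> = Q (Suc n) * (1 + (\<Sum>b\<le>n. \<Prod>i=b..n. Q i)) + 1"
    by (simp only: Suc.IH telescope) (simp add: algebra_simps)
  also have "\<dots> = 1 + (\<Sum>b\<le>Suc n. \<Prod>i=b..Suc n. Q i)"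
    by (simp add: sum_distrib_left prod.cl_ivl_Suc algebra_simps)
  finally show ?case .
qed

lemma sum_kappa_closed_form:
  fixes Q r :: "nat \<Rightarrow> real" and T :: real
  assumes "Q 0 = 0" "r 0 = 0"
  shows "(\<Sum>\<kappa>=1..Suc n. (1 - Q (Suc n - \<kappa>)) * (\<Prod>i=Suc n-\<kappa>+1..n. Q i)
                       * (r (Suc n - \<kappa>) + T * real \<kappa>))
         - T * (\<Sum>\<kappa>=1..Suc n. \<Prod>i=Suc n-\<kappa>..n. Q i) - T
       = (\<Sum>b=1..n. (1 - Q b) * r b * (\<Prod>i=b+1..n. Q i))"
proof -
  have reverse: "(\<Sum>\<kappa>=1..Suc n. H \<kappa>) = (\<Sum>b\<le>n. H (Suc n - b))" for H :: "nat \<Rightarrow> real"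
    by (rule sum.reindex_bij_witness[where i="\<lambda>b. Suc n - b" and j="\<lambda>\<kappa>. Suc n - \<kappa>"]) auto
  have "(\<Sum>\<kappa>=1..Suc n. (1 - Q (Suc n - \<kappa>)) * (\<Prod>i=Suc n-\<kappa>+1..n. Q i)
                   * (r (Suc n - \<kappa>) + T * real \<kappa>))
      = (\<Sum>b\<le>n. (1 - Q b) * r b * (\<Prod>i=b+1..n. Q i))
        + T * (\<Sum>b\<le>n. (1 - Q b) * (\<Prod>i=b+1..n. Q i) * real (Suc n - b))"
    unfolding reverse sum_distrib_left sum.distrib[symmetric]
    by (intro sum.cong refl) (auto simp: algebra_simps)
  also have "\<dots> = (\<Sum>b\<le>n. (1 - Q b) * r b * (\<Prod>i=b+1..n. Q i))
                   + T * (1 + (\<Sum>b\<le>n. \<Prod>i=b..n. Q i))"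
    by (simp only: sum_prod_weighted[of Q, OF assms(1)])
  also have "(\<Sum>b\<le>n. (1 - Q b) * r b * (\<Prod>i=b+1..n. Q i))
           = (\<Sum>b=1..n. (1 - Q b) * r b * (\<Prod>i=b+1..n. Q i))"
    using assms(2) by (simp add: atMost_atLeast0 sum.atLeast_Suc_atMost)
  finally show ?thesis
    unfolding reverse by (simp add: algebra_simps)
qed

lemma expectation_peak_latency_cond:
  assumes "T \<ge> 1" and p: "0 < p (Suc n)" "p (Suc n) \<le> 1"
  shows "measure_pmf.expectation (cond_pmf (slot_space T (Suc n) p) {w. Zb T w (Suc n)})
           (peak_latency T (Suc n))
       = measure_pmf.expectation (slot_space T n p) (\<lambda>w. real (trailing_failures T w n))
         + ((1 - p (Suc n)) / p (Suc n) - real T * (1 - p (Suc n)) ^ T / (1 - (1 - p (Suc n)) ^ T))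
         + 1"
proof -
  let ?S = "slot_space T (Suc n) p"
  let ?Z = "{w. Zb T w (Suc n)}"
  let ?Q = "(1 - p (Suc n)) ^ T"
  let ?D = "measure_pmf.expectation (slot_space T n p) (\<lambda>w. real (trailing_failures T w n))"
  let ?X = "\<lambda>g. if Zb T g (Suc n) then real (Xb T g (Suc n)) else real T"
  let ?N = "\<lambda>g. of_bool (\<not> Zb T g (Suc n)) :: real"
  have Q: "?Q < 1"
    using assms by (simp add: power_less_one_iff)
  have indicator_split: "indicator ?Z (override_on g f ({1..n} \<times> {..<T})) = 1 - ?N g" for f g
    by (simp add: Zb_override_on)
  have latency_split:
    "indicator ?Z (override_on g f ({1..n} \<times> {..<T}))
       * peak_latency T (Suc n) (override_on g f ({1..n} \<times> {..<T}))
     = ?X g - real T * ?N g + (real (trailing_failures T f n) + 1) * (1 - ?N g)" for f g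
    by (simp add: peak_latency_Suc Zb_override_on Xb_override_on trailing_failures_override_on)
  have "measure_pmf.prob ?S ?Z = measure_pmf.expectation ?S (indicator ?Z)"
    by simp
  also have "\<dots> = 1 - ?Q"
    using p by (simp only: expectation_slot_space_Suc indicator_split)
      (simp add: expectation_no_success_block)
  finally have prob: "measure_pmf.prob ?S ?Z = 1 - ?Q" .
  have numerator: "measure_pmf.expectation ?S (\<lambda>w. indicator ?Z w * peak_latency T (Suc n) w)
      = (1 - p (Suc n)) * (1 - ?Q) / p (Suc n) - real T * ?Q + (?D + 1) * (1 - ?Q)"
    using p by (simp only: expectation_slot_space_Suc latency_split)
      (simp add: expectation_no_success_block expectation_first_success_block algebra_simps)
  have success_possible: "set_pmf ?S \<inter> ?Z \<noteq> {}"
    using prob Q by (auto simp: measure_pmf_zero_iff[symmetric])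
  have "measure_pmf.expectation (cond_pmf ?S ?Z) (peak_latency T (Suc n))
      = ((1 - p (Suc n)) * (1 - ?Q) / p (Suc n) - real T * ?Q + (?D + 1) * (1 - ?Q)) / (1 - ?Q)"
    by (simp only: expectation_cond_pmf[OF finite_set_slot_space success_possible] numerator prob)
  also have "\<dots> = ?D + ((1 - p (Suc n)) / p (Suc n) - real T * ?Q / (1 - ?Q)) + 1"
    using p Q by (simp add: field_simps)
  finally show ?thesis .
qed

theorem theorem2:
  fixes T k :: nat and p :: "nat \<Rightarrow> real"
  assumes "T \<ge> 1" and "k \<ge> 1"
    and "\<And>i. i \<in> {1..k} \<Longrightarrow> 0 < p i \<and> p i \<le> 1"
    and "p 0 = 1"
  shows "measure_pmf.expectation
           (cond_pmf (slot_space T k p) {w. Zb T w k}) (peak_latency T k)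
       = (\<Sum>\<kappa>=1..k. (1 - (1 - p (k - \<kappa>)) ^ T) * (\<Prod>i=k-\<kappa>+1..k-1. (1 - p i) ^ T)
                     * ((1 - p (k - \<kappa>)) / p (k - \<kappa>) + real T * real \<kappa>))
         - real T * (\<Sum>\<kappa>=1..k. \<Prod>i=k-\<kappa>..k-1. (1 - p i) ^ T)
         - real T
         + ((1 - p k) / p k - real T * (1 - p k) ^ T / (1 - (1 - p k) ^ T))
         + 1"
proof -
  obtain n where k: "k = Suc n"
    using assms(2) by (cases k) auto
  have closed_form:
    "(\<Sum>\<kappa>=1..k. (1 - (1 - p (k - \<kappa>)) ^ T) * (\<Prod>i=k-\<kappa>+1..k-1. (1 - p i) ^ T)
                  * ((1 - p (k - \<kappa>)) / p (k - \<kappa>) + real T * real \<kappa>))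
      - real T * (\<Sum>\<kappa>=1..k. \<Prod>i=k-\<kappa>..k-1. (1 - p i) ^ T) - real T
     = measure_pmf.expectation (slot_space T n p) (\<lambda>w. real (trailing_failures T w n))"
    using sum_kappa_closed_form[of "\<lambda>i. (1 - p i) ^ T" "\<lambda>i. (1 - p i) / p i" n "real T"]
      expectation_trailing_failures[of n p T] assms(1,3,4)
    by (simp add: k)
  show ?thesis
    using expectation_peak_latency_cond[of T p n] assms(1,3) closed_form by (simp add: k)
qed

end
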